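(* Let $\rho:U^>_q(L\mathfrak{sl}_2)\to\mathcal B$ be the algebra homomorphism determined by $M_{1,n}=e_{-n}\mapsto\sum_{i=1}^{r+1}x_i^n\prod_{j\ne i}\frac{x_i}{x_i-x_j}\Gamma_i$ for all $n\in\mathbb Z$ (equivalently $\mathfrak m_1(z)\mapsto\mathfrak e(\mathfrak q^{-1/2}z)$). Then for all $\alpha\ge1$ and $n\in\mathbb Z$, \[\rho(M_{\alpha,n})=\sum_{J\subset\{1,\dots,r+1\},\,|J|=\alpha}\prod_{i\in J}x_i^n\cdot\prod_{i\in J}^{j\notin J}\frac{x_i}{x_i-x_j}\cdot\prod_{i\in J}\Gamma_i.\]
   Context: Let $q$ be a formal variable, $\mathfrak q=q^2$ (so $\mathfrak q^{1/2}=q$), and $r\in\mathbb N$. $U^>_q(L\mathfrak{sl}_2)$ is the $\mathbb C(q)$-algebra generated by $e_p$ ($p\in\mathbb Z$) subject to $(z-q^2w)e(z)e(w)=(q^2z-w)e(w)e(z)$, $e(z)=\sum_pe_pz^{-p}$. Set $M_{1,n}=e_{-n}$ and for $k\ge1$, $M_{k,n}=\frac{(-1)^{k(k-1)/2}}{(1-\mathfrak q)^{k-1}}Y_k$ with $Y_1=M_{1,n-k+1}$, $Y_j=[Y_{j-1},M_{1,n-k+2j-1}]_{\mathfrak q^j}$ ($2\le j\le k$), $[x,y]_c=xy-c\,yx$; $\mathfrak m_1(z)=\sum_nM_{1,n}z^n$. $\mathcal B$ is the $\mathbb C(q)$-algebra generated by $x_i^{\pm1},\Gamma_i^{\pm1}$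 ($1\le i\le r+1$), all commuting except $\Gamma_ix_i=\mathfrak q\,x_i\Gamma_i$, localized at the multiplicative set generated by $x_i-\mathfrak q^mx_j$ ($i\ne j$, $m\in\mathbb Z$). With $\delta(z)=\sum_nz^n$, $\mathfrak e(z)=\sum_{i=1}^{r+1}\delta(\mathfrak q^{1/2}x_iz)\prod_{j\ne i}\frac{x_i}{x_i-x_j}\Gamma_i$. The assignment defining $\rho$ is known to extend to an algebra homomorphism (it arises from a GKLO-type homomorphism). *)

theory Defs
  imports Complex_Main "HOL-Computational_Algebra.Polynomial" "HOL-Computational_Algebra.Fraction_Field"
begin

type_synonym Cq = "complex poly fract"

definition qvar :: Cq where "qvar = Fract [:0, 1:] 1"

definition qfrak :: Cq where "qfrak = qvar ^ 2"

definition runit :: "'a::ring_1 \<Rightarrow> bool" where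
  "runit a \<longleftrightarrow> (\<exists>b. a * b = 1 \<and> b * a = 1)"

definition rinv :: "'a::ring_1 \<Rightarrow> 'a" where
  "rinv a = (THE b. a * b = 1 \<and> b * a = 1)"

definition zpow :: "'a::ring_1 \<Rightarrow> int \<Rightarrow> 'a" where
  "zpow a n = (if 0 \<le> n then a ^ nat n else rinv a ^ nat (- n))"

definition qcomm :: "'a::ring_1 \<Rightarrow> 'a \<Rightarrow> 'a \<Rightarrow> 'a" where
  "qcomm s a b = a * b - s * b * a"

definition rhoE :: "nat \<Rightarrow> (nat \<Rightarrow> 'a::ring_1) \<Rightarrow> (nat \<Rightarrow> 'a) \<Rightarrow> int \<Rightarrow> 'a" where
  "rhoE r x G n = (\<Sum>i\<in>{1..r+1}.
      zpow (x i) n * prod_list (map (\<lambda>j. x i * rinv (x i - x j)) (filter (\<lambda>j. j \<noteq> i) [1..<r+2])) * G i)"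

text \<open>Iterated q-commutators Y_j (j \<ge> 1) for M_{k,n}, computed with images E p = rho(M_{1,p}),
  and scalar embedding c: Y_1 = E(n-k+1), Y_j = [Y_{j-1}, E(n-k+2j-1)]_{qfrak^j}.\<close>
fun Yaux :: "(Cq \<Rightarrow> 'a::ring_1) \<Rightarrow> (int \<Rightarrow> 'a) \<Rightarrow> nat \<Rightarrow> int \<Rightarrow> nat \<Rightarrow> 'a" where
  "Yaux c E k n 0 = 0"
| "Yaux c E k n (Suc 0) = E (n - int k + 1)"
| "Yaux c E k n (Suc (Suc j)) =
     qcomm (c (qfrak ^ (Suc (Suc j)))) (Yaux c E k n (Suc j)) (E (n - int k + 2 * int (Suc (Suc j)) - 1))"

definition Mimg :: "(Cq \<Rightarrow> 'a::ring_1) \<Rightarrow> (int \<Rightarrow> 'a) \<Rightarrow> nat \<Rightarrow> int \<Rightarrow> 'a" where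
  "Mimg c E k n = c ((-1) ^ (k * (k - 1) div 2) / (1 - qfrak) ^ (k - 1)) * Yaux c E k n k"

end

theory Submission
  imports Defs "HOL-Algebra.FiniteProduct"
begin

text \<open>
  Write \<open>S\<^sub>k(N)\<close> (\<open>Msum k N\<close> below) for the right-hand side with \<open>\<alpha> = k\<close> and
  \<open>n = N\<close>, so that \<open>\<rho>(e\<^sub>-\<^sub>p) = S\<^sub>1(p)\<close>. Writing \<open>q\<close> for \<open>qfrak\<close>, the theorem
  follows by induction on \<open>\<alpha>\<close> from the identity
  \<open>S\<^sub>k(N) S\<^sub>1(p) - q\<^sup>k\<^sup>+\<^sup>1 S\<^sub>1(p) S\<^sub>k(N) = (-1)\<^sup>k (1 - q) S\<^sub>k\<^sub>+\<^sub>1(N + 1)\<close>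
  for \<open>p = N + k + 1\<close>. Expand both products over pairs \<open>(J, i)\<close>. For \<open>i \<in> J\<close> the
  contribution of \<open>(J, i)\<close> vanishes: moving \<open>\<Gamma>\<^sub>J\<close> past \<open>x\<^sub>i\<^sup>p\<close> and \<open>\<Gamma>\<^sub>i\<close> past
  \<open>x\<^sub>J\<^sup>N\<close> produces the factors \<open>q\<^sup>p\<close> and \<open>q\<^sup>N\<close>, whose ratio is \<open>q\<^sup>k\<^sup>+\<^sup>1\<close>.
  The other terms regroup by \<open>K = J \<union> {i}\<close>, and their coefficients summed over \<open>i \<in> K\<close>
  give \<open>(-1)\<^sup>k (1 - q) \<Prod>\<^sub>a\<^sub>\<in>\<^sub>K x\<^sub>a\<close> by the Lagrange interpolation identity
  \<open>\<Sum>\<^sub>s y\<^sub>s\<^sup>m\<^sup>-\<^sup>1 / \<Prod>\<^sub>t\<^sub>\<noteq>\<^sub>s (y\<^sub>s - y\<^sub>t) = 1\<close> for the \<open>m = 2|K|\<close> nodes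
  \<open>x\<^sub>a, q x\<^sub>a\<close>.

  The ring is not commutative. All computations with the \<open>x\<^sub>i\<close> take place in the bicommutant
  of \<open>{x\<^sub>i}\<close>, a commutative subring containing their inverses and the scalars, and finite
  products are taken there.
\<close>

lemma runitI: "a * b = 1 \<Longrightarrow> b * a = 1 \<Longrightarrow> runit a"
  unfolding runit_def by blast

lemma rinv_unique:
  assumes "a * b = 1" "b * a = 1"
  shows "rinv a = b"
  unfolding rinv_def
proof (rule the_equality)
  fix b' assume "a * b' = 1 \<and> b' * a = 1"
  then have "b' = b' * (a * b)" and "b' * a = 1" using assms by simp_all
  then show "b' = b" by (simp add: mult.assoc[symmetric])
qed (use assms in simp)

lemma runit_right_inverse: "runit a \<Longrightarrow> a * rinv a = 1"
  and runit_left_inverse: "runit a \<Longrightarrow> rinv a * a = 1"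
  unfolding runit_def using rinv_unique by metis+

lemma runit_one [simp]: "runit 1"
  by (rule runitI[of 1 1]) simp_all

lemma runit_mult:
  assumes "runit a" "runit b"
  shows "runit (a * b)"
    and "rinv (a * b) = rinv b * rinv a"
proof -
  have "a * b * (rinv b * rinv a) = a * (b * rinv b) * rinv a"
    and "rinv b * rinv a * (a * b) = rinv b * (rinv a * a) * b"
    by (simp_all only: mult.assoc)
  then have "a * b * (rinv b * rinv a) = 1" "rinv b * rinv a * (a * b) = 1"
    using assms by (simp_all add: runit_right_inverse runit_left_inverse)
  then show "runit (a * b)" "rinv (a * b) = rinv b * rinv a"
    by (auto intro: runitI rinv_unique)
qed

lemma runit_minus: "runit a \<Longrightarrow> runit (- a)"
  and rinv_minus: "runit a \<Longrightarrow> rinv (- a) = - rinv a"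
  by (auto intro!: runitI[of _ "- rinv a"] rinv_unique simp: runit_right_inverse runit_left_inverse)

lemma zpow_add_nat:
  assumes "runit a"
  shows "zpow a (m + int n) = zpow a m * a ^ n"
proof (induction n)
  case (Suc n)
  have step: "zpow a (k + 1) = zpow a k * a" for k
  proof (cases "k \<ge> 0")
    case True
    then have "nat (k + 1) = Suc (nat k)" by simp
    with True show ?thesis unfolding zpow_def by (simp add: power_Suc2 del: power_Suc)
  next
    case False
    then have "nat (- k) = Suc (nat (- (k + 1)))" by simp
    with False show ?thesis
      unfolding zpow_def by (simp add: power_Suc2 mult.assoc runit_left_inverse[OF assms] del: power_Suc)
  qed
  have "zpow a (m + int (Suc n)) = zpow a (m + int n) * a"
    using step[of "m + int n"] by (simp add: algebra_simps)
  with Suc show ?case by (simp add: power_Suc2 mult.assoc del: power_Suc)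
qed simp

section \<open>Bicommutants\<close>

definition pairwise_commute :: "'a::times set \<Rightarrow> bool" where
  "pairwise_commute W \<longleftrightarrow> (\<forall>v\<in>W. \<forall>w\<in>W. v * w = w * v)"

definition bicommutant :: "'a::times set \<Rightarrow> 'a set" where
  "bicommutant W = {a. \<forall>b. (\<forall>w\<in>W. b * w = w * b) \<longrightarrow> a * b = b * a}"

lemma bicommutantI:
  "(\<And>b. (\<And>w. w \<in> W \<Longrightarrow> b * w = w * b) \<Longrightarrow> a * b = b * a) \<Longrightarrow> a \<in> bicommutant W"
  unfolding bicommutant_def by blast

lemma bicommutantD:
  "a \<in> bicommutant W \<Longrightarrow> (\<And>w. w \<in> W \<Longrightarrow> b * w = w * b) \<Longrightarrow> a * b = b * a"
  unfolding bicommutant_def by blast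

lemma pairwise_commute_subset_bicommutant: "pairwise_commute W \<Longrightarrow> W \<subseteq> bicommutant W"
  unfolding pairwise_commute_def by (auto intro: bicommutantI)

lemma bicommutant_commute:
  assumes "pairwise_commute W" "a \<in> bicommutant W" "b \<in> bicommutant W"
  shows "a * b = b * a"
proof (rule bicommutantD[OF assms(2)])
  fix w assume "w \<in> W"
  with assms(1) have "\<And>v. v \<in> W \<Longrightarrow> w * v = v * w" unfolding pairwise_commute_def by blast
  with assms(3) show "b * w = w * b" by (rule bicommutantD)
qed

lemma bicommutant_left_commute:
  fixes a b :: "'a::semigroup_mult"
  assumes "pairwise_commute W" "a \<in> bicommutant W" "b \<in> bicommutant W"
  shows "a * (b * d) = b * (a * d)"
  by (simp add: mult.assoc[symmetric] bicommutant_commute[OF assms])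

lemma central_in_bicommutant: "(\<And>y. a * y = y * a) \<Longrightarrow> a \<in> bicommutant W"
  by (rule bicommutantI) simp

lemma bicommutant_mult [simp]:
  fixes a b :: "'a::semigroup_mult"
  shows "a \<in> bicommutant W \<Longrightarrow> b \<in> bicommutant W \<Longrightarrow> a * b \<in> bicommutant W"
  by (rule bicommutantI) (metis bicommutantD mult.assoc)

lemma bicommutant_one [simp]: "(1::'a::monoid_mult) \<in> bicommutant W"
  by (rule central_in_bicommutant) simp

lemma bicommutant_power [simp]:
  fixes a :: "'a::monoid_mult"
  shows "a \<in> bicommutant W \<Longrightarrow> a ^ n \<in> bicommutant W"
  by (induction n) simp_all

lemma bicommutant_add [simp]:
  fixes a b :: "'a::semiring"
  shows "a \<in> bicommutant W \<Longrightarrow> b \<in> bicommutant W \<Longrightarrow> a + b \<in> bicommutant W"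
  by (rule bicommutantI) (simp add: distrib_left distrib_right bicommutantD)

lemma bicommutant_uminus [simp]:
  fixes a :: "'a::ring"
  shows "a \<in> bicommutant W \<Longrightarrow> - a \<in> bicommutant W"
  by (rule bicommutantI) (simp add: bicommutantD)

lemma bicommutant_diff [simp]:
  fixes a b :: "'a::ring"
  shows "a \<in> bicommutant W \<Longrightarrow> b \<in> bicommutant W \<Longrightarrow> a - b \<in> bicommutant W"
  using bicommutant_add[of a W "- b"] by simp

lemma bicommutant_rinv [simp]:
  assumes "a \<in> bicommutant W" "runit a"
  shows "rinv a \<in> bicommutant W"
proof (rule bicommutantI)
  fix b assume "\<And>w. w \<in> W \<Longrightarrow> b * w = w * b"
  with assms(1) have "a * b = b * a" by (rule bicommutantD)
  then have "rinv a * b * (a * rinv a) = rinv a * (a * b) * rinv a" by (simp add: mult.assoc)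
  then show "rinv a * b = b * rinv a"
    by (simp add: runit_right_inverse[OF assms(2)] mult.assoc[symmetric] runit_left_inverse[OF assms(2)])
qed

lemma bicommutant_zpow [simp]: "a \<in> bicommutant W \<Longrightarrow> runit a \<Longrightarrow> zpow a n \<in> bicommutant W"
  unfolding zpow_def by simp

lemma power_mult_bicommutant:
  fixes a b :: "'a::monoid_mult"
  assumes "pairwise_commute W" "a \<in> bicommutant W" "b \<in> bicommutant W"
  shows "(a * b) ^ n = a ^ n * b ^ n"
  by (induction n)
    (simp_all add: mult.assoc bicommutant_left_commute[OF assms(1,3) bicommutant_power[OF assms(2)]])

lemma zpow_mult_bicommutant:
  assumes "pairwise_commute W" "a \<in> bicommutant W" "b \<in> bicommutant W" "runit a" "runit b"
  shows "zpow (a * b) n = zpow a n * zpow b n"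
proof -
  have "rinv (a * b) = rinv a * rinv b"
    using assms by (simp add: runit_mult bicommutant_commute[of W "rinv b"])
  then show ?thesis
    unfolding zpow_def using assms by (simp add: power_mult_bicommutant)
qed

definition bicommutant_monoid :: "'a::monoid_mult set \<Rightarrow> 'a monoid" where
  "bicommutant_monoid W = \<lparr>carrier = bicommutant W, mult = (*), one = 1\<rparr>"

definition bprod :: "'a::monoid_mult set \<Rightarrow> ('b \<Rightarrow> 'a) \<Rightarrow> 'b set \<Rightarrow> 'a" where
  "bprod W f A = finprod (bicommutant_monoid W) f A"

lemma comm_monoid_bicommutant_monoid: "pairwise_commute W \<Longrightarrow> comm_monoid (bicommutant_monoid W)"
  unfolding bicommutant_monoid_def
  by (rule comm_monoidI) (simp_all add: mult.assoc bicommutant_commute)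

context
  fixes W :: "'a::monoid_mult set"
  assumes W: "pairwise_commute W"
begin

interpretation comm_monoid "bicommutant_monoid W"
  using comm_monoid_bicommutant_monoid[OF W] .

lemma carrier_bicommutant_monoid [simp]:
  "carrier (bicommutant_monoid W) = bicommutant W"
  "mult (bicommutant_monoid W) = (*)" "one (bicommutant_monoid W) = 1"
  by (simp_all add: bicommutant_monoid_def)

lemma bprod_empty [simp]: "bprod W f {} = 1"
  unfolding bprod_def by simp

lemma bprod_closed [simp]: "(\<And>i. i \<in> A \<Longrightarrow> f i \<in> bicommutant W) \<Longrightarrow> bprod W f A \<in> bicommutant W"
  unfolding bprod_def using finprod_closed[of f A] by auto

lemma bprod_insert:
  "finite A \<Longrightarrow> a \<notin> A \<Longrightarrow> f a \<in> bicommutant W \<Longrightarrow> (\<And>i. i \<in> A \<Longrightarrow> f i \<in> bicommutant W) \<Longrightarrow>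
    bprod W f (insert a A) = f a * bprod W f A"
  unfolding bprod_def by (subst finprod_insert) auto

lemma bprod_remove:
  "finite A \<Longrightarrow> a \<in> A \<Longrightarrow> (\<And>i. i \<in> A \<Longrightarrow> f i \<in> bicommutant W) \<Longrightarrow>
    bprod W f A = f a * bprod W f (A - {a})"
  using bprod_insert[of "A - {a}" a f] by (simp add: insert_absorb)

lemma bprod_singleton [simp]: "f a \<in> bicommutant W \<Longrightarrow> bprod W f {a} = f a"
  using bprod_insert[of "{}" a f] by simp

lemma bprod_mult:
  "(\<And>i. i \<in> A \<Longrightarrow> f i \<in> bicommutant W) \<Longrightarrow> (\<And>i. i \<in> A \<Longrightarrow> g i \<in> bicommutant W) \<Longrightarrow>
    bprod W (\<lambda>i. f i * g i) A = bprod W f A * bprod W g A"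
  unfolding bprod_def using finprod_multf[of f A g] by auto

lemma bprod_cong:
  "A = B \<Longrightarrow> (\<And>i. i \<in> B \<Longrightarrow> f i = g i) \<Longrightarrow> (\<And>i. i \<in> B \<Longrightarrow> g i \<in> bicommutant W) \<Longrightarrow>
    bprod W f A = bprod W g B"
  unfolding bprod_def by (rule finprod_cong') auto

lemma bprod_reindex:
  "inj_on h A \<Longrightarrow> (\<And>i. i \<in> h ` A \<Longrightarrow> f i \<in> bicommutant W) \<Longrightarrow>
    bprod W f (h ` A) = bprod W (\<lambda>i. f (h i)) A"
  unfolding bprod_def by (rule finprod_reindex) auto

lemma bprod_Un:
  "finite A \<Longrightarrow> finite B \<Longrightarrow> A \<inter> B = {} \<Longrightarrow> (\<And>i. i \<in> A \<union> B \<Longrightarrow> f i \<in> bicommutant W) \<Longrightarrow>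
    bprod W f (A \<union> B) = bprod W f A * bprod W f B"
  unfolding bprod_def using finprod_Un_disjoint[of A B f] by auto

lemma bprod_const: "finite A \<Longrightarrow> a \<in> bicommutant W \<Longrightarrow> bprod W (\<lambda>i. a) A = a ^ card A"
  by (induction A rule: finite_induct) (simp_all add: bprod_insert)

lemma bprod_times_UNIV_bool:
  assumes "finite A" "\<And>p. p \<in> A \<times> UNIV \<Longrightarrow> f p \<in> bicommutant W"
  shows "bprod W f (A \<times> UNIV) = bprod W (\<lambda>a. f (a, False)) A * bprod W (\<lambda>a. f (a, True)) A"
proof -
  have slice: "bprod W f ((\<lambda>a. (a, t)) ` A) = bprod W (\<lambda>a. f (a, t)) A" for t
    using assms(2) by (intro bprod_reindex) (auto simp: inj_on_def)
  have "A \<times> UNIV = (\<lambda>a. (a, False)) ` A \<union> (\<lambda>a. (a, True)) ` A"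
    by (auto simp: UNIV_bool)
  also have "bprod W f \<dots> = bprod W f ((\<lambda>a. (a, False)) ` A) * bprod W f ((\<lambda>a. (a, True)) ` A)"
    using assms by (intro bprod_Un) auto
  finally show ?thesis unfolding slice .
qed

lemma bprod_scale:
  "finite A \<Longrightarrow> a \<in> bicommutant W \<Longrightarrow> (\<And>i. i \<in> A \<Longrightarrow> f i \<in> bicommutant W) \<Longrightarrow>
    bprod W (\<lambda>i. a * f i) A = a ^ card A * bprod W f A"
  by (simp add: bprod_mult bprod_const)

lemma prod_list_eq_bprod:
  "distinct xs \<Longrightarrow> (\<And>i. i \<in> set xs \<Longrightarrow> f i \<in> bicommutant W) \<Longrightarrow>
    prod_list (map f xs) = bprod W f (set xs)"
  by (induction xs) (simp_all add: bprod_insert)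

end

lemma sum_card_subsets_insert:
  assumes "finite V"
  shows "(\<Sum>J\<in>{J. J \<subseteq> V \<and> card J = k}. \<Sum>i\<in>V - J. f J i)
    = (\<Sum>K\<in>{K. K \<subseteq> V \<and> card K = k + 1}. \<Sum>i\<in>K. f (K - {i}) i)"
proof -
  have fin: "finite {J. J \<subseteq> V \<and> card J = n}" for n
    by (rule finite_subset[of _ "Pow V"]) (use assms in auto)
  have "(\<Sum>J\<in>{J. J \<subseteq> V \<and> card J = k}. \<Sum>i\<in>V - J. f J i)
      = (\<Sum>(J, i)\<in>Sigma {J. J \<subseteq> V \<and> card J = k} (\<lambda>J. V - J). f J i)"
    using assms by (intro sum.Sigma) (simp_all add: fin)
  also have "\<dots> = (\<Sum>(K, i)\<in>Sigma {K. K \<subseteq> V \<and> card K = k + 1} (\<lambda>K. K). f (K - {i}) i)"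
  proof (rule sum.reindex_bij_witness[where i = "\<lambda>(K, i). (K - {i}, i)" and j = "\<lambda>(J, i). (insert i J, i)"])
    fix a assume "a \<in> Sigma {J. J \<subseteq> V \<and> card J = k} (\<lambda>J. V - J)"
    then obtain J i where a: "a = (J, i)" "J \<subseteq> V" "card J = k" "i \<in> V" "i \<notin> J" by auto
    moreover have "finite J" using a(2) assms by (rule finite_subset)
    ultimately show "(\<lambda>(K, i). (K - {i}, i)) ((\<lambda>(J, i). (insert i J, i)) a) = a"
      and "(\<lambda>(J, i). (insert i J, i)) a \<in> Sigma {K. K \<subseteq> V \<and> card K = k + 1} (\<lambda>K. K)"
      and "(\<lambda>(K, i). f (K - {i}) i) ((\<lambda>(J, i). (insert i J, i)) a) = (\<lambda>(J, i). f J i) a"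
      by auto
  next
    fix b assume "b \<in> Sigma {K. K \<subseteq> V \<and> card K = k + 1} (\<lambda>K. K)"
    then obtain K i where b: "b = (K, i)" "K \<subseteq> V" "card K = k + 1" "i \<in> K" by auto
    moreover have "finite K" using b(2) assms by (rule finite_subset)
    ultimately show "(\<lambda>(J, i). (insert i J, i)) ((\<lambda>(K, i). (K - {i}, i)) b) = b"
      and "(\<lambda>(K, i). (K - {i}, i)) b \<in> Sigma {J. J \<subseteq> V \<and> card J = k} (\<lambda>J. V - J)"
      by (auto simp: insert_absorb)
  qed
  also have "\<dots> = (\<Sum>K\<in>{K. K \<subseteq> V \<and> card K = k + 1}. \<Sum>i\<in>K. f (K - {i}) i)"
    using assms by (intro sum.Sigma[symmetric]) (auto simp: fin dest: finite_subset[OF _ assms])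
  finally show ?thesis .
qed

section \<open>A Lagrange interpolation identity\<close>

definition interpolation_nodes :: "'a::ring_1 set \<Rightarrow> ('b \<Rightarrow> 'a) \<Rightarrow> 'b set \<Rightarrow> bool" where
  "interpolation_nodes W y S \<longleftrightarrow> finite S \<and> (\<forall>j\<in>S. y j \<in> bicommutant W) \<and>
     (\<forall>j\<in>S. \<forall>l\<in>S. j \<noteq> l \<longrightarrow> runit (y j - y l))"

definition lagrange_weight :: "'a::ring_1 set \<Rightarrow> ('b \<Rightarrow> 'a) \<Rightarrow> 'b set \<Rightarrow> 'b \<Rightarrow> 'a" where
  "lagrange_weight W y S j = bprod W (\<lambda>l. rinv (y j - y l)) (S - {j})"

definition lagrange_sum :: "'a::ring_1 set \<Rightarrow> ('b \<Rightarrow> 'a) \<Rightarrow> 'b set \<Rightarrow> nat \<Rightarrow> 'a" where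
  "lagrange_sum W y S d = (\<Sum>j\<in>S. y j ^ d * lagrange_weight W y S j)"

context
  fixes W :: "'a::ring_1 set" and y :: "'b \<Rightarrow> 'a"
  assumes W: "pairwise_commute W"
begin

lemma interpolation_nodes_subset: "interpolation_nodes W y S \<Longrightarrow> T \<subseteq> S \<Longrightarrow> interpolation_nodes W y T"
  unfolding interpolation_nodes_def by (auto intro: finite_subset)

lemma lagrange_sum_drop_node:
  assumes S: "interpolation_nodes W y S" and m: "m \<in> S"
  shows "(\<Sum>j\<in>S. y j ^ d * ((y j - y m) * lagrange_weight W y S j)) = lagrange_sum W y (S - {m}) d"
proof -
  have "(y j - y m) * lagrange_weight W y S j = lagrange_weight W y (S - {m}) j" if j: "j \<in> S - {m}" for j
  proof -
    have u: "runit (y j - y m)" using S j m unfolding interpolation_nodes_def by auto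
    have "S - {j} - {m} = S - {m} - {j}" by blast
    then have "lagrange_weight W y S j = rinv (y j - y m) * lagrange_weight W y (S - {m}) j"
      unfolding lagrange_weight_def using S j m unfolding interpolation_nodes_def
      by (subst bprod_remove[OF W, of _ m]) auto
    then show ?thesis by (simp add: mult.assoc[symmetric] runit_right_inverse[OF u])
  qed
  moreover have "finite S" using S unfolding interpolation_nodes_def by simp
  ultimately show ?thesis unfolding lagrange_sum_def by (simp add: sum.remove[OF _ m])
qed

lemma lagrange_sum_Suc:
  assumes S: "interpolation_nodes W y S" and m: "m \<in> S"
  shows "lagrange_sum W y S (Suc d) = lagrange_sum W y (S - {m}) d + y m * lagrange_sum W y S d"
proof -
  have "y j ^ Suc d * lagrange_weight W y S j
      = y j ^ d * ((y j - y m) * lagrange_weight W y S j) + y m * (y j ^ d * lagrange_weight W y S j)"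
    if "j \<in> S" for j
  proof -
    have "y m * y j ^ d = y j ^ d * y m"
      using S m that bicommutant_commute[OF W] unfolding interpolation_nodes_def by simp
    then show ?thesis by (simp add: algebra_simps power_Suc2 flip: mult.assoc del: power_Suc)
  qed
  then show ?thesis
    unfolding lagrange_sum_drop_node[OF assms, symmetric]
    by (simp add: lagrange_sum_def sum.distrib sum_distrib_left)
qed

lemma lagrange_sum_diff:
  assumes S: "interpolation_nodes W y S" and "m \<in> S" "m' \<in> S"
  shows "(y m' - y m) * lagrange_sum W y S d = lagrange_sum W y (S - {m}) d - lagrange_sum W y (S - {m'}) d"
proof -
  have "(y m' - y m) * (y j ^ d * w) = y j ^ d * ((y j - y m) * w) - y j ^ d * ((y j - y m') * w)"
    if "j \<in> S" for j w
  proof -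
    have "(y m' - y m) * y j ^ d = y j ^ d * (y m' - y m)"
      using S assms(2,3) that bicommutant_commute[OF W] unfolding interpolation_nodes_def by simp
    then have "(y m' - y m) * (y j ^ d * w) = y j ^ d * ((y m' - y m) * w)"
      by (simp only: mult.assoc[symmetric])
    then show ?thesis by (simp add: algebra_simps)
  qed
  then show ?thesis
    unfolding lagrange_sum_drop_node[OF S \<open>m \<in> S\<close>, symmetric] lagrange_sum_drop_node[OF S \<open>m' \<in> S\<close>, symmetric]
    by (simp add: lagrange_sum_def sum_distrib_left sum_subtractf[symmetric])
qed

lemma lagrange_sum_eq:
  assumes "interpolation_nodes W y S" "S \<noteq> {}" "d \<le> card S - 1"
  shows "lagrange_sum W y S d = (if d = card S - 1 then 1 else 0)"
  using assms
proof (induction "card S" arbitrary: S d rule: less_induct)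
  case less
  have fin: "finite S" using less.prems(1) unfolding interpolation_nodes_def by simp
  have drop: "lagrange_sum W y (S - {m}) d' = (if d' = card S - 2 then 1 else 0)"
    if "m \<in> S" "card S \<ge> 2" "d' \<le> card S - 2" for m d'
  proof -
    have card: "card (S - {m}) = card S - 1" using that fin by simp
    then have "S - {m} \<noteq> {}" using that by (intro notI) simp
    with card that less.hyps[of "S - {m}" d'] less.prems(1) show ?thesis
      by (simp add: interpolation_nodes_subset numeral_2_eq_2)
  qed
  show ?case using \<open>d \<le> card S - 1\<close>
  proof (induction d)
    case 0
    show ?case
    proof (cases "card S = 1")
      case True
      then obtain j where "S = {j}" by (auto simp: card_1_singleton_iff)
      then show ?thesis by (simp add: lagrange_sum_def lagrange_weight_def W)
    next
      case False
      moreover have "card S \<noteq> 0" using fin less.prems(2) by simp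
      ultimately have two: "card S \<ge> 2" by linarith
      then obtain m m' where mm': "m \<in> S" "m' \<in> S" "m \<noteq> m'"
        using card_le_Suc0_iff_eq[OF fin] by (metis One_nat_def not_less_eq_eq numeral_2_eq_2)
      have u: "runit (y m' - y m)" using less.prems(1) mm' unfolding interpolation_nodes_def by auto
      have "(y m' - y m) * lagrange_sum W y S 0 = 0"
        using lagrange_sum_diff[OF less.prems(1) mm'(1,2)] drop[OF mm'(1) two] drop[OF mm'(2) two] by simp
      then have "rinv (y m' - y m) * ((y m' - y m) * lagrange_sum W y S 0) = 0" by simp
      then show ?thesis using False two by (simp add: mult.assoc[symmetric] runit_left_inverse[OF u])
    qed
  next
    case (Suc d)
    obtain m where m: "m \<in> S" using less.prems(2) by blast
    from Suc show ?case
      using lagrange_sum_Suc[OF less.prems(1) m] drop[OF m, of d] by auto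
  qed
qed

end

definition intertwines :: "'a::times \<Rightarrow> 'a \<Rightarrow> 'a \<Rightarrow> bool" where
  "intertwines g a a' \<longleftrightarrow> g * a = a' * g"

lemma intertwines_one: "intertwines g (1::'a::monoid_mult) 1"
  unfolding intertwines_def by simp

lemma intertwines_mult:
  fixes g :: "'a::semigroup_mult"
  shows "intertwines g a a' \<Longrightarrow> intertwines g b b' \<Longrightarrow> intertwines g (a * b) (a' * b')"
  unfolding intertwines_def by (metis mult.assoc)

lemma intertwines_trans:
  fixes g :: "'a::semigroup_mult"
  shows "intertwines h a a' \<Longrightarrow> intertwines g a' a'' \<Longrightarrow> intertwines (g * h) a a''"
  unfolding intertwines_def by (metis mult.assoc)

lemma intertwines_diff:
  fixes g :: "'a::ring"
  shows "intertwines g a a' \<Longrightarrow> intertwines g b b' \<Longrightarrow> intertwines g (a - b) (a' - b')"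
  unfolding intertwines_def by (simp add: left_diff_distrib right_diff_distrib)

lemma intertwines_rinv:
  assumes "intertwines g u u'" "runit u" "runit u'"
  shows "intertwines g (rinv u) (rinv u')"
proof -
  have "rinv u' * (g * u) * rinv u = rinv u' * (u' * g) * rinv u"
    using assms(1) unfolding intertwines_def by simp
  then show ?thesis unfolding intertwines_def
    by (simp add: mult.assoc runit_right_inverse[OF assms(2)] runit_left_inverse[OF assms(3)]
        flip: mult.assoc[of "rinv u'" u'])
qed

lemma intertwines_power:
  fixes g :: "'a::monoid_mult"
  shows "intertwines g a a' \<Longrightarrow> intertwines g (a ^ n) (a' ^ n)"
  by (induction n) (simp_all add: intertwines_one intertwines_mult)

lemma intertwines_zpow:
  "intertwines g a a' \<Longrightarrow> runit a \<Longrightarrow> runit a' \<Longrightarrow> intertwines g (zpow a n) (zpow a' n)"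
  unfolding zpow_def by (simp add: intertwines_power intertwines_rinv)

lemma intertwines_bprod:
  assumes W: "pairwise_commute W" and "finite A"
    and "\<And>i. i \<in> A \<Longrightarrow> f i \<in> bicommutant W" "\<And>i. i \<in> A \<Longrightarrow> f' i \<in> bicommutant W"
    and "\<And>i. i \<in> A \<Longrightarrow> intertwines g (f i) (f' i)"
  shows "intertwines g (bprod W f A) (bprod W f' A)"
  using assms(2-)
  by (induction A rule: finite_induct) (simp_all add: W bprod_insert intertwines_one intertwines_mult)


section \<open>The summands and their \<open>q\<close>-commutators\<close>

lemma qfrak_nonzero: "qfrak \<noteq> 0"
proof -
  have "qvar \<noteq> 0" unfolding qvar_def by (simp add: Zero_fract_def eq_fract)
  then show ?thesis unfolding qfrak_def by simp
qed

lemma one_minus_qfrak_nonzero: "1 - qfrak \<noteq> 0"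
proof
  assume "1 - qfrak = 0"
  then have "qfrak = 1" by simp
  then have "Fract ([:0, 1:] * [:0, 1:]) 1 = Fract 1 (1::complex poly)"
    unfolding qfrak_def qvar_def power2_eq_square by (simp add: One_fract_def)
  then have "[:0, 1:] * [:0, 1:] = (1::complex poly)" by (simp add: eq_fract)
  then show False using degree_mult_eq[of "[:0, 1::complex:]" "[:0, 1:]"] by simp
qed

locale gklo =
  fixes c :: "Cq \<Rightarrow> 'a::ring_1"
    and x G :: "nat \<Rightarrow> 'a"
    and r :: nat
  assumes c_add: "\<And>a b. c (a + b) = c a + c b"
    and c_mult: "\<And>a b. c (a * b) = c a * c b"
    and c_one: "c 1 = 1"
    and c_central: "\<And>a y. c a * y = y * c a"
    and xx_comm: "\<And>i j. i \<in> {1..r+1} \<Longrightarrow> j \<in> {1..r+1} \<Longrightarrow> x i * x j = x j * x i"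
    and GG_comm: "\<And>i j. i \<in> {1..r+1} \<Longrightarrow> j \<in> {1..r+1} \<Longrightarrow> G i * G j = G j * G i"
    and Gx_comm: "\<And>i j. i \<in> {1..r+1} \<Longrightarrow> j \<in> {1..r+1} \<Longrightarrow> i \<noteq> j \<Longrightarrow> G i * x j = x j * G i"
    and Gx_q: "\<And>i. i \<in> {1..r+1} \<Longrightarrow> G i * x i = c qfrak * x i * G i"
    and x_unit: "\<And>i. i \<in> {1..r+1} \<Longrightarrow> runit (x i)"
    and loc_unit: "\<And>i j m. i \<in> {1..r+1} \<Longrightarrow> j \<in> {1..r+1} \<Longrightarrow> i \<noteq> j \<Longrightarrow>
                     runit (x i - c (qfrak powi m) * x j)"
begin

definition V :: "nat set" where "V = {1..r+1}"

abbreviation q :: 'a where "q \<equiv> c qfrak"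
abbreviation C :: "'a set" where "C \<equiv> bicommutant (x ` V)"
abbreviation GC :: "'a set" where "GC \<equiv> bicommutant (G ` V)"

lemma finite_V [simp]: "finite V"
  unfolding V_def by simp

lemma finite_subset_V: "J \<subseteq> V \<Longrightarrow> finite J"
  by (rule finite_subset[OF _ finite_V])

lemma c_zero: "c 0 = 0"
  using c_add[of 0 0] by simp

lemma c_diff: "c (a - b) = c a - c b"
  using c_add[of "a - b" b] by (simp add: eq_diff_eq)

lemma c_power: "c (a ^ n) = c a ^ n"
  by (induction n) (simp_all add: c_one c_mult)

lemma c_minus_one_power: "c ((- 1) ^ k) = (- 1) ^ k"
  using c_diff[of 0 1] by (simp add: c_power c_zero c_one)

lemma runit_c: "a \<noteq> 0 \<Longrightarrow> runit (c a)"
  by (rule runitI[of _ "c (inverse a)"]) (simp_all flip: c_mult add: c_one)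

lemma c_in_bicommutant [simp]: "c a \<in> bicommutant W"
  by (rule central_in_bicommutant) (simp add: c_central)

lemma pairwise_commute_x: "pairwise_commute (x ` V)"
  unfolding pairwise_commute_def V_def using xx_comm by auto

lemma pairwise_commute_G: "pairwise_commute (G ` V)"
  unfolding pairwise_commute_def V_def using GG_comm by auto

lemma x_in_C [simp]: "i \<in> V \<Longrightarrow> x i \<in> C"
  using pairwise_commute_subset_bicommutant[OF pairwise_commute_x] by blast

lemma G_in_GC [simp]: "i \<in> V \<Longrightarrow> G i \<in> GC"
  using pairwise_commute_subset_bicommutant[OF pairwise_commute_G] by blast

lemma C_commute: "a \<in> C \<Longrightarrow> b \<in> C \<Longrightarrow> a * b = b * a"
  by (rule bicommutant_commute[OF pairwise_commute_x])

lemma C_left_commute: "a \<in> C \<Longrightarrow> b \<in> C \<Longrightarrow> a * (b * d) = b * (a * d)"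
  by (rule bicommutant_left_commute[OF pairwise_commute_x])

lemma runit_q [simp]: "runit q"
  by (rule runit_c[OF qfrak_nonzero])

lemma runit_x [simp]: "i \<in> V \<Longrightarrow> runit (x i)"
  using x_unit by (simp add: V_def)

lemma runit_x_diff [simp]: "i \<in> V \<Longrightarrow> j \<in> V \<Longrightarrow> i \<noteq> j \<Longrightarrow> runit (x i - x j)"
  using loc_unit[of i j 0] by (simp add: c_one V_def)

lemma one_minus_q_mult_x: "x i - q * x i = c (1 - qfrak) * x i"
  by (simp add: c_diff c_one left_diff_distrib)

text \<open>The case \<open>i = j\<close> is where \<open>1 - qfrak \<noteq> 0\<close> enters.\<close>
lemma runit_x_diff_q [simp]: "i \<in> V \<Longrightarrow> j \<in> V \<Longrightarrow> runit (x i - q * x j)"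
  using loc_unit[of i j 1] runit_mult(1)[OF runit_c[OF one_minus_qfrak_nonzero] runit_x]
  by (cases "i = j") (simp_all add: V_def one_minus_q_mult_x)

lemma runit_q_x_diff [simp]: "i \<in> V \<Longrightarrow> j \<in> V \<Longrightarrow> runit (q * x i - x j)"
  using runit_minus[OF runit_x_diff_q[of j i]] by simp

lemma runit_q_x_diff_q [simp]: "i \<in> V \<Longrightarrow> j \<in> V \<Longrightarrow> i \<noteq> j \<Longrightarrow> runit (q * x i - q * x j)"
  using runit_mult(1)[OF runit_q runit_x_diff[of i j]] by (simp add: right_diff_distrib mult.assoc)

definition shift :: "nat set \<Rightarrow> nat \<Rightarrow> 'a" where
  "shift L l = (if l \<in> L then q * x l else x l)"

definition ratio :: "(nat \<Rightarrow> 'a) \<Rightarrow> nat \<Rightarrow> nat \<Rightarrow> 'a" where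
  "ratio w a b = w a * rinv (w a - w b)"

definition cross :: "(nat \<Rightarrow> 'a) \<Rightarrow> nat set \<Rightarrow> nat set \<Rightarrow> 'a" where
  "cross w A B = bprod (x ` V) (\<lambda>(a, b). ratio w a b) (A \<times> B)"

definition xpow :: "(nat \<Rightarrow> 'a) \<Rightarrow> int \<Rightarrow> nat set \<Rightarrow> 'a" where
  "xpow w N J = bprod (x ` V) (\<lambda>a. zpow (w a) N) J"

definition Gprod :: "nat set \<Rightarrow> 'a" where
  "Gprod J = bprod (G ` V) G J"

definition admissible :: "(nat \<Rightarrow> 'a) \<Rightarrow> bool" where
  "admissible w \<longleftrightarrow> (\<forall>l\<in>V. w l \<in> C \<and> runit (w l) \<and> (\<forall>l'\<in>V. l \<noteq> l' \<longrightarrow> runit (w l - w l')))"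

lemma shift_empty [simp]: "shift {} = x"
  unfolding shift_def by auto

lemma shift_in: "l \<in> L \<Longrightarrow> shift L l = q * x l"
  and shift_notin: "l \<notin> L \<Longrightarrow> shift L l = x l"
  unfolding shift_def by simp_all

lemma admissible_shift: "admissible (shift L)"
  unfolding admissible_def shift_def
  by (auto simp: runit_mult C_commute simp flip: right_diff_distrib mult.assoc)

lemma admissible_x: "admissible x"
  using admissible_shift[of "{}"] by simp

context
  fixes w assumes w: "admissible w"
begin

lemma admissible_in_C: "l \<in> V \<Longrightarrow> w l \<in> C"
  and admissible_runit: "l \<in> V \<Longrightarrow> runit (w l)"
  and admissible_runit_diff: "l \<in> V \<Longrightarrow> l' \<in> V \<Longrightarrow> l \<noteq> l' \<Longrightarrow> runit (w l - w l')"
  using w unfolding admissible_def by auto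

lemma ratio_in_C: "a \<in> V \<Longrightarrow> b \<in> V \<Longrightarrow> a \<noteq> b \<Longrightarrow> ratio w a b \<in> C"
  unfolding ratio_def by (simp add: admissible_in_C admissible_runit_diff)

lemma cross_factor_in_C:
  assumes "A \<subseteq> V" "B \<subseteq> V" "A \<inter> B = {}" "p \<in> A \<times> B"
  shows "(\<lambda>(a, b). ratio w a b) p \<in> C"
proof -
  obtain a b where "p = (a, b)" "a \<in> A" "b \<in> B" using assms(4) by blast
  moreover have "a \<noteq> b" using calculation(2,3) assms(3) by blast
  ultimately show ?thesis using assms(1,2) ratio_in_C by auto
qed

lemma cross_in_C: "A \<subseteq> V \<Longrightarrow> B \<subseteq> V \<Longrightarrow> A \<inter> B = {} \<Longrightarrow> cross w A B \<in> C"
  unfolding cross_def by (intro bprod_closed[OF pairwise_commute_x] cross_factor_in_C)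

lemma cross_Un_left:
  assumes "A \<union> A' \<subseteq> V" "B \<subseteq> V" "(A \<union> A') \<inter> B = {}" "A \<inter> A' = {}"
  shows "cross w (A \<union> A') B = cross w A B * cross w A' B"
  unfolding cross_def Sigma_Un_distrib1
  using assms cross_factor_in_C[OF assms(1-3)]
  by (intro bprod_Un[OF pairwise_commute_x]) (auto intro: finite_subset_V)

lemma cross_Un_right:
  assumes "A \<subseteq> V" "B \<union> B' \<subseteq> V" "A \<inter> (B \<union> B') = {}" "B \<inter> B' = {}"
  shows "cross w A (B \<union> B') = cross w A B * cross w A B'"
  unfolding cross_def Sigma_Un_distrib2
  using assms cross_factor_in_C[OF assms(1-3)]
  by (intro bprod_Un[OF pairwise_commute_x]) (auto intro: finite_subset_V)

lemma cross_singleton_left: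
  assumes "a \<in> V" "B \<subseteq> V" "a \<notin> B"
  shows "cross w {a} B = bprod (x ` V) (ratio w a) B"
proof -
  have "{a} \<times> B = Pair a ` B" by auto
  then have "cross w {a} B = bprod (x ` V) (\<lambda>(a, b). ratio w a b) (Pair a ` B)"
    unfolding cross_def by simp
  also have "\<dots> = bprod (x ` V) (ratio w a) B"
    using assms by (subst bprod_reindex[OF pairwise_commute_x]) (auto simp: inj_on_def intro!: ratio_in_C)
  finally show ?thesis .
qed

lemma cross_singleton_right:
  assumes "A \<subseteq> V" "b \<in> V" "b \<notin> A"
  shows "cross w A {b} = bprod (x ` V) (\<lambda>a. ratio w a b) A"
proof -
  have "A \<times> {b} = (\<lambda>a. (a, b)) ` A" by auto
  then have "cross w A {b} = bprod (x ` V) (\<lambda>(a, b). ratio w a b) ((\<lambda>a. (a, b)) ` A)"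
    unfolding cross_def by simp
  also have "\<dots> = bprod (x ` V) (\<lambda>a. ratio w a b) A"
    using assms by (subst bprod_reindex[OF pairwise_commute_x]) (auto simp: inj_on_def intro!: ratio_in_C)
  finally show ?thesis .
qed

lemma xpow_in_C: "J \<subseteq> V \<Longrightarrow> xpow w N J \<in> C"
  unfolding xpow_def by (auto intro!: bprod_closed[OF pairwise_commute_x] simp: admissible_in_C admissible_runit)

lemma xpow_singleton: "i \<in> V \<Longrightarrow> xpow w N {i} = zpow (w i) N"
  unfolding xpow_def by (simp add: pairwise_commute_x admissible_in_C admissible_runit)

lemma xpow_remove:
  assumes "J \<subseteq> V" "i \<in> J"
  shows "xpow w N J = zpow (w i) N * xpow w N (J - {i})"
  unfolding xpow_def using assms
  by (intro bprod_remove[OF pairwise_commute_x]) (auto intro: finite_subset_V simp: admissible_in_C admissible_runit)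

end

lemma cross_cong:
  assumes "admissible w" "A \<subseteq> V" "B \<subseteq> V" "A \<inter> B = {}" "\<And>l. l \<in> A \<union> B \<Longrightarrow> v l = w l"
  shows "cross v A B = cross w A B"
  unfolding cross_def using assms cross_factor_in_C[OF assms(1-4)]
  by (intro bprod_cong[OF pairwise_commute_x]) (auto simp: ratio_def)

lemma xpow_cong:
  assumes "admissible w" "J \<subseteq> V" "\<And>l. l \<in> J \<Longrightarrow> v l = w l"
  shows "xpow v N J = xpow w N J"
  unfolding xpow_def using assms
  by (intro bprod_cong[OF pairwise_commute_x]) (auto simp: admissible_in_C admissible_runit)

lemma cross_shift_inside:
  assumes "A \<subseteq> L" "B \<subseteq> L" "A \<subseteq> V" "B \<subseteq> V" "A \<inter> B = {}"
  shows "cross (shift L) A B = cross x A B"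
  unfolding cross_def
proof (intro bprod_cong[OF pairwise_commute_x])
  fix p assume p: "p \<in> A \<times> B"
  then obtain a b where ab: "p = (a, b)" "a \<in> A" "b \<in> B" by blast
  then have ab: "p = (a, b)" "a \<in> V" "b \<in> V" "a \<noteq> b" "a \<in> L" "b \<in> L"
    using assms by blast+
  have "q * x a - q * x b = q * (x a - x b)" by (simp add: right_diff_distrib)
  then have "ratio (shift L) a b = q * x a * (rinv (x a - x b) * rinv q)"
    unfolding ratio_def using ab by (simp add: shift_in runit_mult)
  also have "\<dots> = (q * rinv q) * ratio x a b"
    unfolding ratio_def using ab by (simp add: mult.assoc C_commute C_left_commute)
  finally show "(\<lambda>(a, b). ratio (shift L) a b) p = (\<lambda>(a, b). ratio x a b) p"
    using ab by (simp add: runit_right_inverse)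
  show "(\<lambda>(a, b). ratio x a b) p \<in> C" using cross_factor_in_C[OF admissible_x assms(3-5) p] .
qed simp

lemma zpow_q_mult_x: "i \<in> V \<Longrightarrow> zpow (q * x i) n = zpow q n * zpow (x i) n"
  by (simp add: zpow_mult_bicommutant[OF pairwise_commute_x])

lemma Gprod_in_GC: "J \<subseteq> V \<Longrightarrow> Gprod J \<in> GC"
  unfolding Gprod_def by (auto intro!: bprod_closed[OF pairwise_commute_G])

lemma Gprod_commute: "J \<subseteq> V \<Longrightarrow> I \<subseteq> V \<Longrightarrow> Gprod J * Gprod I = Gprod I * Gprod J"
  by (rule bicommutant_commute[OF pairwise_commute_G Gprod_in_GC Gprod_in_GC])

lemma Gprod_insert: "J \<subseteq> V \<Longrightarrow> i \<in> V \<Longrightarrow> i \<notin> J \<Longrightarrow> Gprod (insert i J) = G i * Gprod J"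
  unfolding Gprod_def by (auto intro!: bprod_insert[OF pairwise_commute_G] intro: finite_subset_V)

lemma Gprod_singleton: "i \<in> V \<Longrightarrow> Gprod {i} = G i"
  unfolding Gprod_def by (simp add: pairwise_commute_G)

lemma G_intertwines_shift:
  assumes "a \<in> V" "l \<in> V" "a \<notin> L"
  shows "intertwines (G a) (shift L l) (shift (insert a L) l)"
proof (cases "l = a")
  case True
  then show ?thesis using assms Gx_q unfolding intertwines_def shift_def V_def by simp
next
  case False
  then have Gx: "G a * x l = x l * G a" using assms Gx_comm unfolding V_def by simp
  have "G a * (q * x l) = q * (G a * x l)"
    by (simp add: mult.assoc[symmetric] c_central[of qfrak "G a", symmetric])
  with Gx False show ?thesis unfolding intertwines_def shift_def by (simp add: mult.assoc)
qed

lemma Gprod_intertwines_x: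
  assumes "J \<subseteq> V" "l \<in> V"
  shows "intertwines (Gprod J) (x l) (shift J l)"
  using finite_subset_V[OF assms(1)] assms
proof (induction J rule: finite_induct)
  case empty
  then show ?case unfolding Gprod_def intertwines_def by (simp add: pairwise_commute_G)
next
  case (insert a J)
  then show ?case
    by (simp add: Gprod_insert intertwines_trans G_intertwines_shift)
qed

context
  fixes g w
  assumes w: "admissible w" and g: "\<And>l. l \<in> V \<Longrightarrow> intertwines g (x l) (w l)"
begin

lemma intertwines_cross:
  assumes "A \<subseteq> V" "B \<subseteq> V" "A \<inter> B = {}"
  shows "intertwines g (cross x A B) (cross w A B)"
  unfolding cross_def
proof (rule intertwines_bprod[OF pairwise_commute_x])
  show "finite (A \<times> B)" using assms by (simp add: finite_subset_V)
  fix p assume p: "p \<in> A \<times> B"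
  show "(\<lambda>(a, b). ratio x a b) p \<in> C" "(\<lambda>(a, b). ratio w a b) p \<in> C"
    using cross_factor_in_C[OF admissible_x assms p] cross_factor_in_C[OF w assms p] .
  obtain a b where "p = (a, b)" "a \<in> V" "b \<in> V" "a \<noteq> b"
    using p assms by blast
  then show "intertwines g ((\<lambda>(a, b). ratio x a b) p) ((\<lambda>(a, b). ratio w a b) p)"
    unfolding ratio_def
    by (auto intro!: intertwines_mult intertwines_rinv intertwines_diff g admissible_runit_diff[OF w])
qed

lemma intertwines_xpow:
  assumes "J \<subseteq> V"
  shows "intertwines g (xpow x N J) (xpow w N J)"
  unfolding xpow_def using assms
  by (intro intertwines_bprod[OF pairwise_commute_x])
     (auto intro!: intertwines_zpow g simp: finite_subset_V admissible_in_C[OF w] admissible_runit[OF w])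

end

definition Mterm :: "int \<Rightarrow> nat set \<Rightarrow> 'a" where
  "Mterm N J = xpow x N J * cross x J (V - J) * Gprod J"

lemma Mterm_mult:
  assumes "J \<subseteq> V" "I \<subseteq> V"
  shows "Mterm N J * Mterm p I
    = (xpow x N J * cross x J (V - J) * (xpow (shift J) p I * cross (shift J) I (V - I)))
      * (Gprod J * Gprod I)"
proof -
  have "intertwines (Gprod J) (xpow x p I * cross x I (V - I)) (xpow (shift J) p I * cross (shift J) I (V - I))"
    using assms Gprod_intertwines_x[OF assms(1)]
    by (intro intertwines_mult intertwines_xpow intertwines_cross admissible_shift) auto
  then have "Gprod J * (xpow x p I * cross x I (V - I)) * Gprod I
      = xpow (shift J) p I * cross (shift J) I (V - I) * (Gprod J * Gprod I)"
    unfolding intertwines_def by (simp add: mult.assoc)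
  then show ?thesis
    unfolding Mterm_def by (simp add: mult.assoc)
qed

lemma cross_split_member:
  assumes J: "J \<subseteq> V" "i \<in> J"
  shows "cross x J (V - J) = cross x {i} (V - J) * cross x (J - {i}) (V - J)"
    and "cross (shift {i}) J (V - J) = cross (shift {i}) {i} (V - J) * cross x (J - {i}) (V - J)"
    and "cross x {i} (V - {i}) = cross x {i} (J - {i}) * cross x {i} (V - J)"
    and "cross (shift J) {i} (V - {i}) = cross x {i} (J - {i}) * cross (shift {i}) {i} (V - J)"
proof -
  have i: "i \<in> V" using J by blast
  have sets: "J = {i} \<union> (J - {i})" "V - {i} = (J - {i}) \<union> (V - J)" by (use J in auto)
  have same: "cross (shift {i}) (J - {i}) (V - J) = cross x (J - {i}) (V - J)"
    "cross (shift J) {i} (V - J) = cross (shift {i}) {i} (V - J)"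
    by (rule cross_cong[OF admissible_x], use J in \<open>auto simp: shift_def\<close>)
      (rule cross_cong[OF admissible_shift], use J in \<open>auto simp: shift_def\<close>)
  show "cross x J (V - J) = cross x {i} (V - J) * cross x (J - {i}) (V - J)"
    using J i by (subst sets(1), intro cross_Un_left[OF admissible_x]) auto
  show "cross (shift {i}) J (V - J) = cross (shift {i}) {i} (V - J) * cross x (J - {i}) (V - J)"
    using J i by (subst sets(1), subst cross_Un_left[OF admissible_shift]) (auto simp: same)
  show "cross x {i} (V - {i}) = cross x {i} (J - {i}) * cross x {i} (V - J)"
    using J i by (subst sets(2), intro cross_Un_right[OF admissible_x]) auto
  have "cross (shift J) {i} (J - {i}) = cross x {i} (J - {i})"
    using J by (intro cross_shift_inside) auto
  then show "cross (shift J) {i} (V - {i}) = cross x {i} (J - {i}) * cross (shift {i}) {i} (V - J)"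
    using J i by (subst sets(2), subst cross_Un_right[OF admissible_shift]) (auto simp: same)
qed

lemma Mterm_q_commute:
  assumes J: "J \<subseteq> V" "card J = k" "i \<in> J" and p: "p = N + int k + 1"
  shows "Mterm N J * Mterm p {i} = q ^ (k + 1) * (Mterm p {i} * Mterm N J)"
proof -
  have i: "i \<in> V" using J by blast
  define \<alpha> \<beta> \<gamma> P X
    where "\<alpha> = cross x {i} (V - J)" and "\<beta> = cross x {i} (J - {i})" and "\<gamma> = cross (shift {i}) {i} (V - J)"
      and "P = cross x (J - {i}) (V - J)" and "X = xpow x N (J - {i})"
  have X: "xpow x N J = zpow (x i) N * X"
    unfolding X_def by (rule xpow_remove[OF admissible_x J(1,3)])
  have "xpow (shift {i}) N (J - {i}) = X"
    unfolding X_def by (rule xpow_cong[OF admissible_x]) (use J in \<open>auto simp: shift_def\<close>)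
  then have X': "xpow (shift {i}) N J = zpow (q * x i) N * X"
    using xpow_remove[OF admissible_shift J(1,3)] by (simp add: shift_in)
  have zq: "zpow q p = zpow q N * q ^ (k + 1)"
    using zpow_add_nat[OF runit_q, of N "k + 1"] p by (simp add: ac_simps)
  have C: "zpow (x i) N \<in> C" "zpow (x i) p \<in> C" "zpow q N \<in> C" "X \<in> C" "\<alpha> \<in> C" "\<beta> \<in> C" "\<gamma> \<in> C" "P \<in> C"
    unfolding \<alpha>_def \<beta>_def \<gamma>_def P_def X_def using J i
    by (auto intro!: cross_in_C xpow_in_C admissible_x admissible_shift)
  have "Mterm N J * Mterm p {i}
      = (zpow (x i) N * X * (\<alpha> * P) * (zpow (q * x i) p * (\<beta> * \<gamma>))) * (Gprod J * Gprod {i})"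
    using Mterm_mult[OF J(1), of "{i}" N p] i J(3)
    by (simp add: X cross_split_member[OF J(1,3)] xpow_singleton[OF admissible_shift] shift_in
        \<alpha>_def \<beta>_def \<gamma>_def P_def)
  also have "\<dots> = q ^ (k + 1) * ((zpow (x i) p * (\<beta> * \<alpha>) * (zpow (q * x i) N * X * (\<gamma> * P))) * (Gprod {i} * Gprod J))"
    using C i J by (simp add: zpow_q_mult_x zq Gprod_commute mult.assoc C_commute C_left_commute)
  also have "\<dots> = q ^ (k + 1) * (Mterm p {i} * Mterm N J)"
    using Mterm_mult[OF _ J(1), of "{i}" p N] i
    by (simp add: X' cross_split_member[OF J(1,3)] xpow_singleton[OF admissible_x]
        \<alpha>_def \<beta>_def \<gamma>_def P_def)
  finally show ?thesis .
qed

definition commutator_coeff :: "nat set \<Rightarrow> nat \<Rightarrow> 'a" where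
  "commutator_coeff K i =
     x i ^ card K * (cross x (K - {i}) {i} * cross (shift (K - {i})) {i} (K - {i}))
     - q ^ card K * (x i ^ card K * (cross x {i} (K - {i}) * cross (shift {i}) (K - {i}) {i}))"

lemma cross_split_nonmember:
  assumes K: "K \<subseteq> V" "i \<in> K"
  shows "cross x (K - {i}) (V - (K - {i})) = cross x (K - {i}) {i} * cross x (K - {i}) (V - K)"
    and "cross x K (V - K) = cross x {i} (V - K) * cross x (K - {i}) (V - K)"
    and "cross x {i} (V - {i}) = cross x {i} (K - {i}) * cross x {i} (V - K)"
    and "cross (shift (K - {i})) {i} (V - {i}) = cross (shift (K - {i})) {i} (K - {i}) * cross x {i} (V - K)"
    and "cross (shift {i}) (K - {i}) (V - (K - {i})) = cross (shift {i}) (K - {i}) {i} * cross x (K - {i}) (V - K)"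
proof -
  have i: "i \<in> V" using K by blast
  have sets: "K = {i} \<union> (K - {i})" "V - (K - {i}) = {i} \<union> (V - K)" "V - {i} = (K - {i}) \<union> (V - K)"
    by (use K in auto)
  have same: "cross (shift (K - {i})) {i} (V - K) = cross x {i} (V - K)"
    "cross (shift {i}) (K - {i}) (V - K) = cross x (K - {i}) (V - K)"
    by (rule cross_cong[OF admissible_x], use K in \<open>auto simp: shift_def\<close>)+
  show "cross x (K - {i}) (V - (K - {i})) = cross x (K - {i}) {i} * cross x (K - {i}) (V - K)"
    using K i by (subst sets(2), intro cross_Un_right[OF admissible_x]) auto
  show "cross x K (V - K) = cross x {i} (V - K) * cross x (K - {i}) (V - K)"
    using K i by (subst (1) sets(1), intro cross_Un_left[OF admissible_x]) auto
  show "cross x {i} (V - {i}) = cross x {i} (K - {i}) * cross x {i} (V - K)"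
    using K i by (subst sets(3), intro cross_Un_right[OF admissible_x]) auto
  show "cross (shift (K - {i})) {i} (V - {i}) = cross (shift (K - {i})) {i} (K - {i}) * cross x {i} (V - K)"
    using K i by (subst sets(3), subst cross_Un_right[OF admissible_shift]) (auto simp: same)
  show "cross (shift {i}) (K - {i}) (V - (K - {i})) = cross (shift {i}) (K - {i}) {i} * cross x (K - {i}) (V - K)"
    using K i by (subst sets(2), subst cross_Un_right[OF admissible_shift]) (auto simp: same)
qed

lemma Mterm_commutator:
  assumes K: "K \<subseteq> V" "card K = k + 1" "i \<in> K" and p: "p = N + int k + 1"
  shows "Mterm N (K - {i}) * Mterm p {i} - q ^ (k + 1) * (Mterm p {i} * Mterm N (K - {i}))
    = xpow x N K * cross x K (V - K) * commutator_coeff K i * Gprod K"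
proof -
  define J where "J = K - {i}"
  have i: "i \<in> V" "i \<notin> J" and J: "J \<subseteq> V" "insert i J = K" using K unfolding J_def by auto
  define \<alpha> P X f\<^sub>1 f\<^sub>2 f\<^sub>3 f\<^sub>4
    where "\<alpha> = cross x {i} (V - K)" and "P = cross x J (V - K)" and "X = xpow x N J"
      and "f\<^sub>1 = cross x J {i}" and "f\<^sub>2 = cross (shift J) {i} J"
      and "f\<^sub>3 = cross x {i} J" and "f\<^sub>4 = cross (shift {i}) J {i}"
  have X: "xpow x N K = zpow (x i) N * X" "xpow (shift {i}) N J = X"
    unfolding X_def J_def
    by (rule xpow_remove[OF admissible_x K(1,3)])
      (rule xpow_cong[OF admissible_x], use K in \<open>auto simp: shift_def\<close>)
  have zp: "zpow (x i) p = zpow (x i) N * x i ^ (k + 1)"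
    using zpow_add_nat[OF runit_x[OF i(1)], of N "k + 1"] p by (simp add: ac_simps)
  have G: "Gprod J * Gprod {i} = Gprod K" "Gprod {i} * Gprod J = Gprod K"
    using Gprod_insert[OF J(1) i] Gprod_commute[OF J(1), of "{i}"] i J(2) by (simp_all add: Gprod_singleton)
  define M where "M = xpow x N K * cross x K (V - K)"
  have C: "zpow (x i) N \<in> C" "X \<in> C" "\<alpha> \<in> C" "P \<in> C" "f\<^sub>1 \<in> C" "f\<^sub>2 \<in> C" "f\<^sub>3 \<in> C" "f\<^sub>4 \<in> C"
    unfolding \<alpha>_def P_def X_def f\<^sub>1_def f\<^sub>2_def f\<^sub>3_def f\<^sub>4_def using K J i
    by (auto intro!: cross_in_C xpow_in_C admissible_x admissible_shift)
  have "M \<in> C"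
    unfolding M_def using K(1) by (simp add: xpow_in_C[OF admissible_x] cross_in_C[OF admissible_x])
  have M: "M = zpow (x i) N * X * (\<alpha> * P)"
    unfolding M_def X(1) cross_split_nonmember(2)[OF K(1,3)] \<alpha>_def P_def J_def ..
  note split = cross_split_nonmember[OF K(1,3), folded J_def]
  have "Mterm N J * Mterm p {i} = M * (x i ^ (k + 1) * (f\<^sub>1 * f\<^sub>2)) * Gprod K"
    using Mterm_mult[OF J(1), of "{i}" N p] i C
    by (simp add: M split zp G xpow_singleton[OF admissible_shift] shift_notin \<alpha>_def P_def f\<^sub>1_def f\<^sub>2_def
        mult.assoc C_commute C_left_commute flip: X_def)
  moreover have "Mterm p {i} * Mterm N J = M * (x i ^ (k + 1) * (f\<^sub>3 * f\<^sub>4)) * Gprod K"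
    using Mterm_mult[OF _ J(1), of "{i}" p N] i C
    by (simp add: M X(2) split zp G xpow_singleton[OF admissible_x] \<alpha>_def P_def f\<^sub>3_def f\<^sub>4_def
        mult.assoc C_commute C_left_commute)
  moreover have "commutator_coeff K i = x i ^ (k + 1) * (f\<^sub>1 * f\<^sub>2) - q ^ (k + 1) * (x i ^ (k + 1) * (f\<^sub>3 * f\<^sub>4))"
    unfolding commutator_coeff_def f\<^sub>1_def f\<^sub>2_def f\<^sub>3_def f\<^sub>4_def J_def K(2) ..
  ultimately show ?thesis
    using C \<open>M \<in> C\<close> by (simp add: M_def[symmetric] J_def[symmetric] right_diff_distrib left_diff_distrib
        mult.assoc C_left_commute)
qed

section \<open>Interpolation at the nodes \<open>x\<^sub>a\<close> and \<open>q x\<^sub>a\<close>\<close>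

definition node :: "nat \<times> bool \<Rightarrow> 'a" where
  "node p = (if snd p then q * x (fst p) else x (fst p))"

lemma node_False [simp]: "node (a, False) = x a"
  and node_True [simp]: "node (a, True) = q * x a"
  unfolding node_def by simp_all

lemma node_in_C [simp]: "a \<in> V \<Longrightarrow> node (a, t) \<in> C"
  by (cases t) simp_all

lemma runit_node_diff [simp]:
  "a \<in> V \<Longrightarrow> b \<in> V \<Longrightarrow> a \<noteq> b \<Longrightarrow> runit (node (a, t) - x b)"
  "a \<in> V \<Longrightarrow> b \<in> V \<Longrightarrow> a \<noteq> b \<Longrightarrow> runit (node (a, t') - q * x b)"
  "a \<in> V \<Longrightarrow> runit (node (a, t) - node (a, \<not> t))"
  by (cases t; cases t'; simp)+

lemma interpolation_nodes_node:
  assumes "K \<subseteq> V"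
  shows "interpolation_nodes (x ` V) node (K \<times> UNIV)"
  unfolding interpolation_nodes_def
proof (intro conjI ballI impI)
  show "finite (K \<times> (UNIV :: bool set))" using finite_subset_V[OF assms] by simp
  fix p p' :: "nat \<times> bool" assume p: "p \<in> K \<times> UNIV" and p': "p' \<in> K \<times> UNIV"
  obtain a t b s where ab: "p = (a, t)" "p' = (b, s)" by (cases p, cases p')
  moreover have "a \<in> V" "b \<in> V" using p p' ab assms by auto
  ultimately show "node p \<in> C" and "p \<noteq> p' \<Longrightarrow> runit (node p - node p')"
    by (cases s; cases "a = b"; auto)+
qed

lemma lagrange_weight_node:
  assumes "K \<subseteq> V" "a \<in> K"
  shows "lagrange_weight (x ` V) node (K \<times> UNIV) (a, t)
    = rinv (node (a, t) - node (a, \<not> t))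
      * (bprod (x ` V) (\<lambda>b. rinv (node (a, t) - x b)) (K - {a})
         * bprod (x ` V) (\<lambda>b. rinv (node (a, t) - q * x b)) (K - {a}))"
proof -
  have a: "a \<in> V" using assms by blast
  have "K \<times> UNIV - {(a, t)} = insert (a, \<not> t) ((K - {a}) \<times> UNIV)"
    using assms(2) by (cases t) auto
  moreover have "rinv (node (a, t) - node p) \<in> C" if "p \<in> (K - {a}) \<times> UNIV" for p
    using that assms by (cases p) (auto simp: node_def subset_iff)
  ultimately show ?thesis
    unfolding lagrange_weight_def using assms a
    by (simp add: bprod_insert[OF pairwise_commute_x] bprod_times_UNIV_bool[OF pairwise_commute_x]
        finite_subset_V)
qed

lemma bprod_x_ratio_flip:
  assumes A: "A \<subseteq> V" and y: "y \<in> C" "\<And>b. b \<in> A \<Longrightarrow> runit (y - x b)"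
  shows "bprod (x ` V) (\<lambda>b. x b * rinv (x b - y)) A
    = (- 1) ^ card A * (bprod (x ` V) x A * bprod (x ` V) (\<lambda>b. rinv (y - x b)) A)"
proof -
  have "bprod (x ` V) (\<lambda>b. x b * rinv (x b - y)) A = bprod (x ` V) (\<lambda>b. - 1 * (x b * rinv (y - x b))) A"
  proof (intro bprod_cong[OF pairwise_commute_x refl])
    fix b assume "b \<in> A"
    then have "rinv (x b - y) = - rinv (y - x b)"
      using rinv_minus[OF y(2)] by simp
    then show "x b * rinv (x b - y) = - 1 * (x b * rinv (y - x b))" by simp
    show "- 1 * (x b * rinv (y - x b)) \<in> C" using A y \<open>b \<in> A\<close> by auto
  qed
  also have "\<dots> = (- 1) ^ card A * bprod (x ` V) (\<lambda>b. x b * rinv (y - x b)) A"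
    using A y by (intro bprod_scale[OF pairwise_commute_x]) (auto simp: finite_subset_V)
  also have "bprod (x ` V) (\<lambda>b. x b * rinv (y - x b)) A
      = bprod (x ` V) x A * bprod (x ` V) (\<lambda>b. rinv (y - x b)) A"
    using A y by (intro bprod_mult[OF pairwise_commute_x]) auto
  finally show ?thesis .
qed

lemma commutator_coeff_eq:
  assumes K: "K \<subseteq> V" "card K = k + 1" and a: "a \<in> K"
  shows "commutator_coeff K a = (- 1) ^ k * bprod (x ` V) x (K - {a})
    * (x a ^ (2 * k + 1) * bprod (x ` V) (\<lambda>b. rinv (x a - x b)) (K - {a})
       * (bprod (x ` V) (\<lambda>b. rinv (x a - q * x b)) (K - {a})
          - q ^ (k + 1) * bprod (x ` V) (\<lambda>b. rinv (q * x a - x b)) (K - {a})))"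
proof -
  define Ka where "Ka = K - {a}"
  have aV: "a \<in> V" and Ka: "Ka \<subseteq> V" "a \<notin> Ka" "card Ka = k"
    using K a finite_subset_V[OF K(1)] unfolding Ka_def by auto
  have Ka_ne: "b \<in> Ka \<Longrightarrow> b \<noteq> a" "b \<in> Ka \<Longrightarrow> a \<noteq> b" "b \<in> Ka \<Longrightarrow> b \<in> V" for b
    using Ka by auto
  define P R\<^sub>1 R\<^sub>2 R\<^sub>3
    where "P = bprod (x ` V) x Ka"
      and "R\<^sub>1 = bprod (x ` V) (\<lambda>b. rinv (x a - x b)) Ka"
      and "R\<^sub>2 = bprod (x ` V) (\<lambda>b. rinv (x a - q * x b)) Ka"
      and "R\<^sub>3 = bprod (x ` V) (\<lambda>b. rinv (q * x a - x b)) Ka"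
  have C: "P \<in> C" "R\<^sub>1 \<in> C" "R\<^sub>2 \<in> C" "R\<^sub>3 \<in> C" "x a ^ k \<in> C" "(- 1) ^ k \<in> C"
    unfolding P_def R\<^sub>1_def R\<^sub>2_def R\<^sub>3_def using Ka_ne aV
    by (auto intro!: bprod_closed[OF pairwise_commute_x])
  have "cross x Ka {a} = (- 1) ^ k * (P * R\<^sub>1)"
    using Ka Ka_ne aV
    by (simp add: cross_singleton_right[OF admissible_x] ratio_def bprod_x_ratio_flip P_def R\<^sub>1_def)
  moreover have "cross (shift Ka) {a} Ka = x a ^ k * R\<^sub>2"
  proof -
    have "cross (shift Ka) {a} Ka = bprod (x ` V) (\<lambda>b. x a * rinv (x a - q * x b)) Ka"
      using Ka aV unfolding cross_singleton_left[OF admissible_shift aV Ka(1,2)]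
      by (intro bprod_cong[OF pairwise_commute_x]) (auto simp: ratio_def shift_def)
    then show ?thesis
      using Ka Ka_ne aV by (simp add: bprod_scale[OF pairwise_commute_x] finite_subset_V R\<^sub>2_def)
  qed
  moreover have "cross x {a} Ka = x a ^ k * R\<^sub>1"
    using Ka Ka_ne aV
    by (simp add: cross_singleton_left[OF admissible_x] ratio_def[abs_def] bprod_scale[OF pairwise_commute_x]
        finite_subset_V R\<^sub>1_def)
  moreover have "cross (shift {a}) Ka {a} = (- 1) ^ k * (P * R\<^sub>3)"
  proof -
    have "cross (shift {a}) Ka {a} = bprod (x ` V) (\<lambda>b. x b * rinv (x b - q * x a)) Ka"
      using Ka Ka_ne aV unfolding cross_singleton_right[OF admissible_shift Ka(1) aV Ka(2)]
      by (intro bprod_cong[OF pairwise_commute_x]) (auto simp: ratio_def shift_def)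
    then show ?thesis
      using Ka Ka_ne aV by (simp add: bprod_x_ratio_flip P_def R\<^sub>3_def)
  qed
  moreover have "x a ^ (k + 1) = x a * x a ^ k" "x a ^ (2 * k + 1) = x a * (x a ^ k * x a ^ k)"
    by (simp_all add: power_add mult_2)
  ultimately show ?thesis
    unfolding commutator_coeff_def Ka_def[symmetric] K(2) P_def[symmetric] R\<^sub>1_def[symmetric]
      R\<^sub>2_def[symmetric] R\<^sub>3_def[symmetric]
    using C aV by (simp add: right_diff_distrib mult.assoc C_commute C_left_commute)
qed

lemma bprod_rinv_q_diff:
  assumes "a \<in> V" "A \<subseteq> V" "a \<notin> A"
  shows "bprod (x ` V) (\<lambda>b. rinv (q * x a - q * x b)) A = rinv q ^ card A * bprod (x ` V) (\<lambda>b. rinv (x a - x b)) A"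
proof -
  have b: "a \<noteq> b" "b \<in> V" if "b \<in> A" for b using that assms by auto
  have "rinv (q * x a - q * x b) = rinv q * rinv (x a - x b)" if "b \<in> A" for b
  proof -
    have "q * x a - q * x b = q * (x a - x b)" by (simp add: right_diff_distrib)
    then show ?thesis using assms b[OF that] by (simp add: runit_mult C_commute)
  qed
  then have "bprod (x ` V) (\<lambda>b. rinv (q * x a - q * x b)) A = bprod (x ` V) (\<lambda>b. rinv q * rinv (x a - x b)) A"
    using assms b by (intro bprod_cong[OF pairwise_commute_x refl]) auto
  then show ?thesis
    using assms b by (simp add: bprod_scale[OF pairwise_commute_x] finite_subset_V)
qed

lemma lagrange_node_pair:
  assumes K: "K \<subseteq> V" "card K = k + 1" and a: "a \<in> K"
  shows "c (1 - qfrak) * x a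
      * (\<Sum>t\<in>UNIV. node (a, t) ^ (2 * k + 1) * lagrange_weight (x ` V) node (K \<times> UNIV) (a, t))
    = x a ^ (2 * k + 1) * bprod (x ` V) (\<lambda>b. rinv (x a - x b)) (K - {a})
      * (bprod (x ` V) (\<lambda>b. rinv (x a - q * x b)) (K - {a})
         - q ^ (k + 1) * bprod (x ` V) (\<lambda>b. rinv (q * x a - x b)) (K - {a}))"
proof -
  define Ka where "Ka = K - {a}"
  have aV: "a \<in> V" and Ka: "Ka \<subseteq> V" "card Ka = k"
    using K a finite_subset_V[OF K(1)] unfolding Ka_def by auto
  have Ka_ne: "b \<in> Ka \<Longrightarrow> a \<noteq> b" "b \<in> Ka \<Longrightarrow> b \<in> V" for b
    using Ka unfolding Ka_def by auto
  define R\<^sub>1 R\<^sub>2 R\<^sub>3 e ri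
    where "R\<^sub>1 = bprod (x ` V) (\<lambda>b. rinv (x a - x b)) Ka"
      and "R\<^sub>2 = bprod (x ` V) (\<lambda>b. rinv (x a - q * x b)) Ka"
      and "R\<^sub>3 = bprod (x ` V) (\<lambda>b. rinv (q * x a - x b)) Ka"
      and "e = c (1 - qfrak)" and "ri = rinv (x a - q * x a)"
  have R\<^sub>4: "bprod (x ` V) (\<lambda>b. rinv (q * x a - q * x b)) Ka = rinv q ^ k * R\<^sub>1"
    unfolding R\<^sub>1_def Ka(2)[symmetric] using Ka aV unfolding Ka_def by (intro bprod_rinv_q_diff) auto
  have w\<^sub>F: "lagrange_weight (x ` V) node (K \<times> UNIV) (a, False) = ri * (R\<^sub>1 * R\<^sub>2)"
    using lagrange_weight_node[OF K(1) a, of False] unfolding ri_def R\<^sub>1_def R\<^sub>2_def Ka_def by simp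
  have w\<^sub>T: "lagrange_weight (x ` V) node (K \<times> UNIV) (a, True) = - ri * (R\<^sub>3 * (rinv q ^ k * R\<^sub>1))"
  proof -
    have "rinv (q * x a - x a) = - ri"
      unfolding ri_def using aV rinv_minus[of "x a - q * x a"] by simp
    then show ?thesis
      using lagrange_weight_node[OF K(1) a, of True] unfolding R\<^sub>4[symmetric] R\<^sub>3_def Ka_def by simp
  qed
  define X w v where "X = x a ^ (2 * k + 1)" and "w = q ^ k" and "v = rinv q ^ k"
  have e_ri: "e * x a * ri = 1"
    unfolding e_def ri_def one_minus_q_mult_x[symmetric] using aV by (intro runit_right_inverse) simp
  have vw: "v * w = 1"
    unfolding v_def w_def by (simp add: power_mult_bicommutant[OF pairwise_commute_x, symmetric] runit_left_inverse)
  have C: "R\<^sub>1 \<in> C" "R\<^sub>2 \<in> C" "R\<^sub>3 \<in> C" "e \<in> C" "ri \<in> C" "x a \<in> C" "q \<in> C" "X \<in> C" "w \<in> C" "v \<in> C"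
    unfolding R\<^sub>1_def R\<^sub>2_def R\<^sub>3_def e_def ri_def X_def w_def v_def using Ka_ne aV
    by (auto intro!: bprod_closed[OF pairwise_commute_x])
  have qX: "(q * x a) ^ (2 * k + 1) = q * (w * w) * X"
    unfolding X_def w_def using aV
    by (simp add: power_mult_bicommutant[OF pairwise_commute_x] power_add mult_2 mult.assoc C_left_commute)
  have sum_bool: "(\<Sum>t\<in>UNIV. f t) = f False + f True" for f :: "bool \<Rightarrow> 'a"
    by (simp add: UNIV_bool)
  have "e * x a * (\<Sum>t\<in>UNIV. node (a, t) ^ (2 * k + 1) * lagrange_weight (x ` V) node (K \<times> UNIV) (a, t))
      = (e * x a * ri) * (X * R\<^sub>1 * R\<^sub>2) - (e * x a * ri) * ((v * w) * (q * w * (X * R\<^sub>1 * R\<^sub>3)))"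
    unfolding sum_bool w\<^sub>F w\<^sub>T node_False node_True qX X_def[symmetric] v_def[symmetric]
    using C by (simp add: algebra_simps C_commute C_left_commute)
  also have "\<dots> = X * R\<^sub>1 * (R\<^sub>2 - q * w * R\<^sub>3)"
    unfolding e_ri vw using C by (simp add: algebra_simps C_commute C_left_commute)
  finally show ?thesis
    unfolding e_def X_def w_def R\<^sub>1_def R\<^sub>2_def R\<^sub>3_def Ka_def by simp
qed

lemma commutator_coeff_lagrange:
  assumes K: "K \<subseteq> V" "card K = k + 1" and a: "a \<in> K"
  shows "commutator_coeff K a = (- 1) ^ k * c (1 - qfrak) * bprod (x ` V) x K
    * (\<Sum>t\<in>UNIV. node (a, t) ^ (2 * k + 1) * lagrange_weight (x ` V) node (K \<times> UNIV) (a, t))"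
proof -
  have aV: "a \<in> V" using K a by blast
  have "bprod (x ` V) x K = x a * bprod (x ` V) x (K - {a})"
    using K a finite_subset_V by (intro bprod_remove[OF pairwise_commute_x]) auto
  moreover have "bprod (x ` V) x (K - {a}) \<in> C"
    using K by (auto intro!: bprod_closed[OF pairwise_commute_x])
  ultimately show ?thesis
    using aV unfolding commutator_coeff_eq[OF assms] lagrange_node_pair[OF assms, symmetric]
    by (simp add: mult.assoc C_left_commute)
qed

lemma sum_commutator_coeff:
  assumes K: "K \<subseteq> V" "card K = k + 1"
  shows "(\<Sum>a\<in>K. commutator_coeff K a) = (- 1) ^ k * c (1 - qfrak) * bprod (x ` V) x K"
proof -
  have card: "card (K \<times> (UNIV :: bool set)) = 2 * k + 2" and ne: "K \<times> (UNIV :: bool set) \<noteq> {}"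
    using K by (auto simp: card_cartesian_product)
  have "(\<Sum>a\<in>K. commutator_coeff K a) = (- 1) ^ k * c (1 - qfrak) * bprod (x ` V) x K
      * (\<Sum>p\<in>K \<times> UNIV. node p ^ (2 * k + 1) * lagrange_weight (x ` V) node (K \<times> UNIV) p)"
    by (simp only: sum.cong[OF refl commutator_coeff_lagrange[OF K]] sum_distrib_left[symmetric]
        sum.cartesian_product')
  also have "(\<Sum>p\<in>K \<times> UNIV. node p ^ (2 * k + 1) * lagrange_weight (x ` V) node (K \<times> UNIV) p) = 1"
    using lagrange_sum_eq[OF pairwise_commute_x interpolation_nodes_node[OF K(1)] ne, of "2 * k + 1"]
    unfolding card lagrange_sum_def by simp
  finally show ?thesis by simp
qed

lemma xpow_add_one:
  assumes "K \<subseteq> V"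
  shows "xpow x (N + 1) K = xpow x N K * bprod (x ` V) x K"
proof -
  have "xpow x (N + 1) K = bprod (x ` V) (\<lambda>a. zpow (x a) N * x a) K"
    unfolding xpow_def using assms zpow_add_nat[of "x _" N 1]
    by (intro bprod_cong[OF pairwise_commute_x refl]) auto
  also have "\<dots> = xpow x N K * bprod (x ` V) x K"
    unfolding xpow_def using assms by (intro bprod_mult[OF pairwise_commute_x]) auto
  finally show ?thesis .
qed

lemma sum_Mterm_commutator:
  assumes K: "K \<subseteq> V" "card K = k + 1" and p: "p = N + int k + 1"
  shows "(\<Sum>i\<in>K. Mterm N (K - {i}) * Mterm p {i} - q ^ (k + 1) * (Mterm p {i} * Mterm N (K - {i})))
    = c ((- 1) ^ k * (1 - qfrak)) * Mterm (N + 1) K"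
proof -
  have C: "xpow x N K \<in> C" "cross x K (V - K) \<in> C" "bprod (x ` V) x K \<in> C"
    using K by (auto intro!: xpow_in_C cross_in_C admissible_x bprod_closed[OF pairwise_commute_x])
  have "(\<Sum>i\<in>K. Mterm N (K - {i}) * Mterm p {i} - q ^ (k + 1) * (Mterm p {i} * Mterm N (K - {i})))
      = xpow x N K * cross x K (V - K) * (\<Sum>i\<in>K. commutator_coeff K i) * Gprod K"
    using Mterm_commutator[OF K _ p] by (simp add: sum_distrib_left sum_distrib_right)
  also have "\<dots> = c ((- 1) ^ k * (1 - qfrak)) * Mterm (N + 1) K"
    unfolding sum_commutator_coeff[OF K] Mterm_def xpow_add_one[OF K(1)] using C
    by (simp add: c_mult c_minus_one_power mult.assoc C_commute C_left_commute)
  finally show ?thesis .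
qed

definition Msum :: "nat \<Rightarrow> int \<Rightarrow> 'a" where
  "Msum k N = (\<Sum>J\<in>{J. J \<subseteq> V \<and> card J = k}. Mterm N J)"

lemma Msum_one: "Msum 1 p = (\<Sum>i\<in>V. Mterm p {i})"
proof -
  have "{J. J \<subseteq> V \<and> card J = 1} = (\<lambda>i. {i}) ` V"
    by (auto simp: card_1_singleton_iff)
  then show ?thesis
    unfolding Msum_def by (simp add: sum.reindex)
qed

lemma Msum_commutator:
  assumes p: "p = N + int k + 1"
  shows "Msum k N * Msum 1 p - q ^ (k + 1) * (Msum 1 p * Msum k N)
    = c ((- 1) ^ k * (1 - qfrak)) * Msum (k + 1) (N + 1)"
proof -
  define F where "F J i = Mterm N J * Mterm p {i} - q ^ (k + 1) * (Mterm p {i} * Mterm N J)" for J i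
  have "Msum k N * Msum 1 p - q ^ (k + 1) * (Msum 1 p * Msum k N)
      = (\<Sum>J\<in>{J. J \<subseteq> V \<and> card J = k}. \<Sum>i\<in>V. F J i)"
    unfolding Msum_one unfolding Msum_def F_def sum_product
    by (simp add: sum_subtractf sum_distrib_left sum.swap[of _ V])
  also have "\<dots> = (\<Sum>J\<in>{J. J \<subseteq> V \<and> card J = k}. \<Sum>i\<in>V - J. F J i)"
  proof (rule sum.cong[OF refl])
    fix J assume "J \<in> {J. J \<subseteq> V \<and> card J = k}"
    then have J: "J \<subseteq> V" "card J = k" by auto
    have "(\<Sum>i\<in>J. F J i) = 0"
      unfolding F_def using Mterm_q_commute[OF J _ p] by simp
    then show "(\<Sum>i\<in>V. F J i) = (\<Sum>i\<in>V - J. F J i)"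
      using sum.subset_diff[OF J(1) finite_V, of "F J"] by simp
  qed
  also have "\<dots> = (\<Sum>K\<in>{K. K \<subseteq> V \<and> card K = k + 1}. \<Sum>i\<in>K. F (K - {i}) i)"
    by (rule sum_card_subsets_insert[OF finite_V])
  also have "\<dots> = c ((- 1) ^ k * (1 - qfrak)) * Msum (k + 1) (N + 1)"
    unfolding Msum_def sum_distrib_left F_def
    by (rule sum.cong[OF refl], rule sum_Mterm_commutator[OF _ _ p]) auto
  finally show ?thesis .
qed

lemma Yaux_Msum:
  assumes "1 \<le> j"
  shows "Yaux c (Msum 1) k n j
    = c ((- 1) ^ (j * (j - 1) div 2) * (1 - qfrak) ^ (j - 1)) * Msum j (n - int k + int j)"
  using assms
proof (induction j rule: nat_induct_at_least)
  case base
  show ?case by (simp add: c_one)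
next
  case (Suc j)
  define a where "a = ((- 1) ^ (j * (j - 1) div 2) * (1 - qfrak) ^ (j - 1) :: Cq)"
  define N where "N = n - int k + int j"
  have "Yaux c (Msum 1) k n (Suc j)
      = qcomm (c (qfrak ^ Suc j)) (c a * Msum j N) (Msum 1 (N + int j + 1))"
    using Suc by (cases j) (simp_all add: a_def N_def algebra_simps)
  also have "\<dots> = c a * (Msum j N * Msum 1 (N + int j + 1) - q ^ (j + 1) * (Msum 1 (N + int j + 1) * Msum j N))"
    unfolding qcomm_def c_power
    by (simp add: algebra_simps c_central[of a] flip: mult.assoc[of "q ^ Suc j"])
  also have "\<dots> = c a * (c ((- 1) ^ j * (1 - qfrak)) * Msum (j + 1) (N + 1))"
    by (simp only: Msum_commutator[OF refl])
  also have "\<dots> = c (a * ((- 1) ^ j * (1 - qfrak))) * Msum (Suc j) (n - int k + int (Suc j))"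
    by (simp add: c_mult mult.assoc N_def add.assoc add.commute[of "int j" 1])
  also have "a * ((- 1) ^ j * (1 - qfrak)) = (- 1) ^ (Suc j * (Suc j - 1) div 2) * (1 - qfrak) ^ (Suc j - 1)"
  proof -
    have "Suc j * (Suc j - 1) div 2 = j * (j - 1) div 2 + j"
      using Suc(1) by (cases j) (simp_all add: algebra_simps)
    then show ?thesis
      unfolding a_def using Suc(1) by (cases j) (simp_all add: power_add algebra_simps)
  qed
  finally show ?case .
qed

lemma Mimg_Msum:
  assumes "1 \<le> \<alpha>"
  shows "Mimg c (Msum 1) \<alpha> n = Msum \<alpha> n"
proof -
  define s d :: Cq where "s = (- 1) ^ (\<alpha> * (\<alpha> - 1) div 2)" and "d = (1 - qfrak) ^ (\<alpha> - 1)"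
  have "d \<noteq> 0" unfolding d_def using one_minus_qfrak_nonzero by simp
  moreover have "s * s = 1" unfolding s_def by (simp flip: power_mult_distrib)
  ultimately have "s / d * (s * d) = 1" by (simp add: field_simps)
  then show ?thesis
    unfolding Mimg_def Yaux_Msum[OF assms] s_def[symmetric] d_def[symmetric]
    by (simp add: mult.assoc[symmetric] c_one flip: c_mult)
qed

lemma set_upt_V: "set [1..<r+2] = V"
  unfolding set_upt V_def by auto

lemma Mterm_prod_list:
  assumes J: "J \<subseteq> V" and vs: "set vs = V" "distinct vs"
  shows "Mterm N J = prod_list (map (\<lambda>i. zpow (x i) N) (sorted_list_of_set J))
     * prod_list [x i * rinv (x i - x j). i \<leftarrow> sorted_list_of_set J, j \<leftarrow> filter (\<lambda>j. j \<notin> J) vs]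
     * prod_list (map G (sorted_list_of_set J))"
proof -
  define xs ys where "xs = sorted_list_of_set J" and "ys = filter (\<lambda>j. j \<notin> J) vs"
  have sets: "set xs = J" "set ys = V - J" "distinct xs" "distinct ys"
    unfolding xs_def ys_def using finite_subset_V[OF J] vs by auto
  have "prod_list (map (\<lambda>i. zpow (x i) N) xs) = xpow x N J"
    unfolding xpow_def using sets J by (subst prod_list_eq_bprod[OF pairwise_commute_x]) auto
  moreover have "prod_list [x i * rinv (x i - x j). i \<leftarrow> xs, j \<leftarrow> ys] = cross x J (V - J)"
  proof -
    have "[x i * rinv (x i - x j). i \<leftarrow> xs, j \<leftarrow> ys] = map (\<lambda>(i, j). ratio x i j) (List.product xs ys)"
      by (simp add: product_concat_map map_concat comp_def ratio_def)
    also have "prod_list \<dots> = bprod (x ` V) (\<lambda>(i, j). ratio x i j) (set (List.product xs ys))"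
      using sets J cross_factor_in_C[OF admissible_x, of J "V - J"]
      by (intro prod_list_eq_bprod[OF pairwise_commute_x]) (auto simp: distinct_product)
    finally show ?thesis
      unfolding cross_def by (simp add: sets)
  qed
  moreover have "prod_list (map G xs) = Gprod J"
    unfolding Gprod_def using sets J by (subst prod_list_eq_bprod[OF pairwise_commute_G]) auto
  ultimately show ?thesis
    unfolding Mterm_def xs_def[symmetric] ys_def[symmetric] by simp
qed

lemma Msum_prod_list:
  "Msum \<alpha> n = (\<Sum>J\<in>{J. J \<subseteq> {1..r+1} \<and> card J = \<alpha>}.
       prod_list (map (\<lambda>i. zpow (x i) n) (sorted_list_of_set J))
     * prod_list [x i * rinv (x i - x j). i \<leftarrow> sorted_list_of_set J, j \<leftarrow> filter (\<lambda>j. j \<notin> J) [1..<r+2]]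
     * prod_list (map G (sorted_list_of_set J)))"
  unfolding Msum_def V_def[symmetric]
  by (rule sum.cong[OF refl], rule Mterm_prod_list[OF _ set_upt_V distinct_upt]) simp

lemma rhoE_eq_Msum_one: "rhoE r x G = Msum 1"
proof
  fix n
  have single: "Mterm n {i} = zpow (x i) n * prod_list (map (\<lambda>j. x i * rinv (x i - x j)) (filter (\<lambda>j. j \<noteq> i) vs)) * G i"
    if "i \<in> V" "set vs = V" "distinct vs" for i vs
    using Mterm_prod_list[OF _ that(2,3), of "{i}" n] that(1) by simp
  show "rhoE r x G n = Msum 1 n"
    unfolding rhoE_def Msum_one V_def[symmetric]
    by (intro sum.cong[OF refl, symmetric] single[OF _ set_upt_V distinct_upt])
qed

end

theorem proposition6p10:
  fixes c :: "Cq \<Rightarrow> 'a::ring_1"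
    and x G :: "nat \<Rightarrow> 'a"
    and r :: nat
  assumes c_add: "\<And>a b. c (a + b) = c a + c b"
    and c_mult: "\<And>a b. c (a * b) = c a * c b"
    and c_one: "c 1 = 1"
    and c_central: "\<And>a y. c a * y = y * c a"
    and xx_comm: "\<And>i j. i \<in> {1..r+1} \<Longrightarrow> j \<in> {1..r+1} \<Longrightarrow> x i * x j = x j * x i"
    and GG_comm: "\<And>i j. i \<in> {1..r+1} \<Longrightarrow> j \<in> {1..r+1} \<Longrightarrow> G i * G j = G j * G i"
    and Gx_comm: "\<And>i j. i \<in> {1..r+1} \<Longrightarrow> j \<in> {1..r+1} \<Longrightarrow> i \<noteq> j \<Longrightarrow> G i * x j = x j * G i"
    and Gx_q: "\<And>i. i \<in> {1..r+1} \<Longrightarrow> G i * x i = c qfrak * x i * G i"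
    and x_unit: "\<And>i. i \<in> {1..r+1} \<Longrightarrow> runit (x i)"
    and G_unit: "\<And>i. i \<in> {1..r+1} \<Longrightarrow> runit (G i)"
    and loc_unit: "\<And>i j m. i \<in> {1..r+1} \<Longrightarrow> j \<in> {1..r+1} \<Longrightarrow> i \<noteq> j \<Longrightarrow>
                     runit (x i - c (qfrak powi m) * x j)"
    and alpha: "1 \<le> \<alpha>"
  shows "Mimg c (rhoE r x G) \<alpha> n =
    (\<Sum>J\<in>{J. J \<subseteq> {1..r+1} \<and> card J = \<alpha>}.
       prod_list (map (\<lambda>i. zpow (x i) n) (sorted_list_of_set J))
     * prod_list [x i * rinv (x i - x j). i \<leftarrow> sorted_list_of_set J, j \<leftarrow> filter (\<lambda>j. j \<notin> J) [1..<r+2]]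
     * prod_list (map G (sorted_list_of_set J)))"
proof -
  interpret gklo c x G r
    by unfold_locales (fact assms)+
  show ?thesis
    unfolding rhoE_eq_Msum_one Mimg_Msum[OF alpha] Msum_prod_list ..
qed

end
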